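(* For any set of positions $P\subseteq\mathsf{Pos}(R)$ and any character $\alpha$: (i) $\displaystyle \delta(P,\alpha)=\bigcup_{v\in\tilde N^\odot(P,\alpha)}\delta^\odot(v,\alpha)\;\cup\;\bigcup_{v\in\tilde N^\ast(P,\alpha)}\delta^\ast(v,\alpha)$; (ii) $\delta^\odot(u,\alpha)\cap\delta^\odot(v,\alpha)=\emptyset$ for any two distinct $u,v\in\tilde N^\odot(P,\alpha)$, and $\delta^\ast(u,\alpha)\cap\delta^\ast(v,\alpha)=\emptyset$ for any two distinct $u,v\in\tilde N^\ast(P,\alpha)$; (iii) $\delta^\odot(v,\alpha)\neq\emptyset$ for every $v\in\tilde N^\odot(P,\alpha)$ and $\delta^\ast(v,\alpha)\neq\emptyset$ for every $v\in\tilde N^\ast(P,\alpha)$.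
   Context: A regular expression $R$ over $\Sigma$ (built from $\epsilon$ and characters using $\odot$, $\mid$, $\ast$) is identified with its parse tree; $\odot$- and $\mid$-nodes $v$ have children $\mathsf{left}(v),\mathsf{right}(v)$, a $\ast$-node has one child. Positions $\mathsf{Pos}(R)$ are the character-labeled leaves, $\mathsf{Pos}_\alpha$ those labeled $\alpha$. For a node $v$, $\mathsf{first}(v)$, $\mathsf{last}(v)$ are the sets of positions occurring first/last in a sequence of positions generated by the subexpression rooted at $v$ (leaves treated as distinct symbols); $\mathsf{follow}(R,p)$ is the set of positions that can immediately follow $p$ in a sequence generated by $R$. $\mathsf{firstextent}(p)=\{v: p\in\mathsf{first}(v)\}$, $\mathsf{lastextent}(p)=\{v:p\in\mathsf{last}(v)\}$, and for a set $X$ of positions $\mathsf{firstextent}(X)=\bigcup_{p\in X}\mathsf{firstextent}(p)$, similarly $\mathsf{lastextent}(X)$. State-set transition (ignoring the start state): $\delta(P,\alpha)=\{q\in\mathsf{Pos}_\alpha : q\in\mathsf{follow}(R,p)\text{ for some }p\in P\}$. $\mathsf{lca}$ denotes lowest common ancestor; $\mathsf{lca}(P,\mathsf{Pos}_\alpha)=\{\mathsf{lca}(p,q):p\in P,q\in\mathsf{Pos}_\alpha\}$. $\mathsf{parent}^\ast(v)$ is the lowest ancestor of $v$ (including $v$ itself) that is a $\ast$-node, extended to sets elementwise. Internal transitions: for a $\odot$-node $v$, $\delta^\odot(v,\alpha)=\{q\in\mathsf{Pos}_\alpha:\mathsf{right}(v)\in\mathsf{firstextent}(q)\}$; for a node $v$,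 $\delta^\ast(v,\alpha)=\{q\in\mathsf{Pos}_\alpha:\mathsf{parent}^\ast(v)\in\mathsf{firstextent}(q)\}$. Transition nodes: $N^\odot(P,\alpha)$ is the set of $\odot$-nodes $v$ with $\mathsf{left}(v)\in\mathsf{lastextent}(P)$ and $\mathsf{right}(v)\in\mathsf{firstextent}(\mathsf{Pos}_\alpha)$; $N^\ast(P,\alpha)$ is the set of $\ast$-nodes in $\mathsf{parent}^\ast(\mathsf{lca}(P,\mathsf{Pos}_\alpha))\cap\mathsf{lastextent}(P)\cap\mathsf{firstextent}(\mathsf{Pos}_\alpha)$. A node $v$ is $\ast$-dominated by $u$ if $u$ is a proper ancestor of $v$ and $\mathsf{first}(v)\subseteq\mathsf{first}(u)$; $\tilde N^\ast(P,\alpha)$ is the set of $v\in N^\ast(P,\alpha)$ not $\ast$-dominated by any node of $N^\ast(P,\alpha)$. A node $v$ is $\odot$-dominated by $u$ if $u$ is a proper ancestor of $v$ and $\mathsf{first}(\mathsf{right}(v))\subseteq\mathsf{first}(\mathsf{right}(u))$; $\tilde N^\odot(P,\alpha)$ is the set of $v\in N^\odot(P,\alpha)$ not $\odot$-dominated by any node of $N^\odot(P,\alpha)$. *)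

theory Defs
  imports Main "HOL-Library.Sublist"
begin

text \<open>Regular expressions, identified with their parse trees.
  Nodes of the parse tree of R are addressed by paths (nat lists) from the root:
  0 = left child (or the unique child of a star node), 1 = right child.\<close>

datatype 'a re = Eps | Chr 'a | Cat "'a re" "'a re" | Alt "'a re" "'a re" | Star "'a re"

fun node_at :: "'a re \<Rightarrow> nat list \<Rightarrow> 'a re option" where
  "node_at r [] = Some r"
| "node_at (Cat r s) (0 # p) = node_at r p"
| "node_at (Cat r s) (Suc 0 # p) = node_at s p"
| "node_at (Alt r s) (0 # p) = node_at r p"
| "node_at (Alt r s) (Suc 0 # p) = node_at s p"
| "node_at (Star r) (0 # p) = node_at r p"
| "node_at _ _ = None"

definition nodes :: "'a re \<Rightarrow> nat list set" where
  "nodes R = {v. node_at R v \<noteq> None}"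

definition left :: "nat list \<Rightarrow> nat list" where "left v = v @ [0]"
definition right :: "nat list \<Rightarrow> nat list" where "right v = v @ [1]"

definition is_cat :: "'a re \<Rightarrow> nat list \<Rightarrow> bool" where
  "is_cat R v \<longleftrightarrow> (\<exists>r s. node_at R v = Some (Cat r s))"

definition is_star :: "'a re \<Rightarrow> nat list \<Rightarrow> bool" where
  "is_star R v \<longleftrightarrow> (\<exists>r. node_at R v = Some (Star r))"

definition Pos :: "'a re \<Rightarrow> nat list set" where
  "Pos R = {p. \<exists>a. node_at R p = Some (Chr a)}"

definition Pos_chr :: "'a re \<Rightarrow> 'a \<Rightarrow> nat list set" where
  "Pos_chr R a = {p. node_at R p = Some (Chr a)}"

text \<open>Sequences of positions (relative paths of leaves) generated by an expression,
  leaves being treated as distinct symbols.\<close>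
fun plang :: "'a re \<Rightarrow> nat list list set" where
  "plang Eps = {[]}"
| "plang (Chr a) = {[[]]}"
| "plang (Cat r s) = {map ((#) 0) u @ map ((#) 1) w | u w. u \<in> plang r \<and> w \<in> plang s}"
| "plang (Alt r s) = map ((#) 0) ` plang r \<union> map ((#) 1) ` plang s"
| "plang (Star r) = {concat ws | ws. \<forall>w\<in>set ws. w \<in> map ((#) 0) ` plang r}"

definition first :: "'a re \<Rightarrow> nat list \<Rightarrow> nat list set" where
  "first R v = {v @ hd w | w r. node_at R v = Some r \<and> w \<in> plang r \<and> w \<noteq> []}"

definition last :: "'a re \<Rightarrow> nat list \<Rightarrow> nat list set" where
  "last R v = {v @ List.last w | w r. node_at R v = Some r \<and> w \<in> plang r \<and> w \<noteq> []}"

definition follow :: "'a re \<Rightarrow> nat list \<Rightarrow> nat list set" where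
  "follow R p = {q. \<exists>u w. u @ [p, q] @ w \<in> plang R}"

definition firstextent :: "'a re \<Rightarrow> nat list set \<Rightarrow> nat list set" where
  "firstextent R X = {v \<in> nodes R. \<exists>p\<in>X. p \<in> first R v}"

definition lastextent :: "'a re \<Rightarrow> nat list set \<Rightarrow> nat list set" where
  "lastextent R X = {v \<in> nodes R. \<exists>p\<in>X. p \<in> last R v}"

definition delta :: "'a re \<Rightarrow> nat list set \<Rightarrow> 'a \<Rightarrow> nat list set" where
  "delta R P a = {q \<in> Pos_chr R a. \<exists>p\<in>P. q \<in> follow R p}"

text \<open>Lowest common ancestor = longest common prefix of the paths.\<close>
fun lcp :: "nat list \<Rightarrow> nat list \<Rightarrow> nat list" where
  "lcp (x # xs) (y # ys) = (if x = y then x # lcp xs ys else [])"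
| "lcp _ _ = []"

definition lca_set :: "nat list set \<Rightarrow> nat list set \<Rightarrow> nat list set" where
  "lca_set P Q = {lcp p q | p q. p \<in> P \<and> q \<in> Q}"

text \<open>parent* v: the lowest ancestor of v (including v) that is a star node;
  as a set (empty if no such ancestor exists), extended elementwise to sets.\<close>
definition pstar :: "'a re \<Rightarrow> nat list \<Rightarrow> nat list set" where
  "pstar R v = {u. prefix u v \<and> is_star R u \<and> (\<forall>w. prefix w v \<and> is_star R w \<longrightarrow> prefix w u)}"

definition pstar_set :: "'a re \<Rightarrow> nat list set \<Rightarrow> nat list set" where
  "pstar_set R V = (\<Union>v\<in>V. pstar R v)"

definition delta_cat :: "'a re \<Rightarrow> nat list \<Rightarrow> 'a \<Rightarrow> nat list set" where
  "delta_cat R v a = {q \<in> Pos_chr R a. right v \<in> firstextent R {q}}"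

definition delta_star :: "'a re \<Rightarrow> nat list \<Rightarrow> 'a \<Rightarrow> nat list set" where
  "delta_star R v a = {q \<in> Pos_chr R a. \<exists>u\<in>pstar R v. u \<in> firstextent R {q}}"

definition Ncat :: "'a re \<Rightarrow> nat list set \<Rightarrow> 'a \<Rightarrow> nat list set" where
  "Ncat R P a = {v. is_cat R v \<and> left v \<in> lastextent R P \<and> right v \<in> firstextent R (Pos_chr R a)}"

definition Nstar :: "'a re \<Rightarrow> nat list set \<Rightarrow> 'a \<Rightarrow> nat list set" where
  "Nstar R P a = {v. is_star R v \<and> v \<in> pstar_set R (lca_set P (Pos_chr R a))
                      \<and> v \<in> lastextent R P \<and> v \<in> firstextent R (Pos_chr R a)}"

definition star_dominated :: "'a re \<Rightarrow> nat list \<Rightarrow> nat list \<Rightarrow> bool" where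
  "star_dominated R v u \<longleftrightarrow> strict_prefix u v \<and> first R v \<subseteq> first R u"

definition cat_dominated :: "'a re \<Rightarrow> nat list \<Rightarrow> nat list \<Rightarrow> bool" where
  "cat_dominated R v u \<longleftrightarrow> strict_prefix u v \<and> first R (right v) \<subseteq> first R (right u)"

definition Nstar_min :: "'a re \<Rightarrow> nat list set \<Rightarrow> 'a \<Rightarrow> nat list set" where
  "Nstar_min R P a = {v \<in> Nstar R P a. \<not> (\<exists>u\<in>Nstar R P a. star_dominated R v u)}"

definition Ncat_min :: "'a re \<Rightarrow> nat list set \<Rightarrow> 'a \<Rightarrow> nat list set" where
  "Ncat_min R P a = {v \<in> Ncat R P a. \<not> (\<exists>u\<in>Ncat R P a. cat_dominated R v u)}"

end

theory Submission
  imports Defs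
begin

text \<open>
  By Glushkov's characterisation, q follows p iff some \<open>\<odot>\<close>-node v has p in last(left v) and
  q in first(right v), or some \<open>\<ast>\<close>-node v has p in last(v) and q in first(v).
  A position stays first (last) at every node on the path from a node to it, so a \<open>\<ast>\<close>-witness
  can be pushed down to parent\<open>\<ast>\<close>(lca(p,q)), and every witness can be replaced by an
  undominated one, since domination only enlarges the relevant first set. Conversely, the nodes at
  which a fixed position q is first form a chain along the path to q with decreasing first sets, so
  of two distinct nodes sharing q the deeper one is dominated by the other: this gives disjointness.
\<close>

section \<open>Glushkov's first and last positions\<close>

definition firsts :: "'a re \<Rightarrow> nat list set" where
  "firsts r = {hd w | w. w \<in> plang r \<and> w \<noteq> []}"

definition lasts :: "'a re \<Rightarrow> nat list set" where
  "lasts r = {List.last w | w. w \<in> plang r \<and> w \<noteq> []}"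

lemma plang_nonempty: "\<exists>w. w \<in> plang r"
  by (induction r) (auto intro: exI[of _ "[]"])

lemma plang_CatI: "u \<in> plang a \<Longrightarrow> w \<in> plang b \<Longrightarrow> map ((#) 0) u @ map ((#) 1) w \<in> plang (Cat a b)"
  by auto

lemma plang_StarI: "\<forall>w\<in>set ws. w \<in> map ((#) 0) ` plang a \<Longrightarrow> concat ws \<in> plang (Star a)"
  by auto

lemma hd_concat_in: "concat ws \<noteq> [] \<Longrightarrow> \<exists>w\<in>set ws. w \<noteq> [] \<and> hd (concat ws) = hd w"
proof (induction ws)
  case (Cons w ws)
  then show ?case by (cases "w = []") auto
qed simp

lemma last_concat_in:
  "concat ws \<noteq> [] \<Longrightarrow> \<exists>w\<in>set ws. w \<noteq> [] \<and> List.last (concat ws) = List.last w"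
proof (induction ws)
  case (Cons w ws)
  then show ?case by (cases "concat ws = []") auto
qed simp

lemma firstsI: "w \<in> plang r \<Longrightarrow> w \<noteq> [] \<Longrightarrow> hd w \<in> firsts r"
  unfolding firsts_def by blast

lemma lastsI: "w \<in> plang r \<Longrightarrow> w \<noteq> [] \<Longrightarrow> List.last w \<in> lasts r"
  unfolding lasts_def by blast

lemma firsts_Eps [simp]: "firsts Eps = {}" and firsts_Chr [simp]: "firsts (Chr c) = {[]}"
  unfolding firsts_def by auto

lemma lasts_Eps [simp]: "lasts Eps = {}" and lasts_Chr [simp]: "lasts (Chr c) = {[]}"
  unfolding lasts_def by auto

lemma firsts_Cat:
  "firsts (Cat a b) = (#) 0 ` firsts a \<union> (if [] \<in> plang a then (#) 1 ` firsts b else {})"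
proof (intro equalityI subsetI)
  fix y assume "y \<in> firsts (Cat a b)"
  then obtain u w where "u \<in> plang a" "w \<in> plang b" "u \<noteq> [] \<or> w \<noteq> []"
    "y = hd (map ((#) 0) u @ map ((#) 1) w)"
    unfolding firsts_def by auto
  then show "y \<in> (#) 0 ` firsts a \<union> (if [] \<in> plang a then (#) 1 ` firsts b else {})"
    by (cases "u = []") (auto simp: hd_map intro: firstsI)
next
  obtain v where v: "v \<in> plang b" using plang_nonempty by blast
  fix y assume "y \<in> (#) 0 ` firsts a \<union> (if [] \<in> plang a then (#) 1 ` firsts b else {})"
  then consider u where "u \<in> plang a" "u \<noteq> []" "y = hd (map ((#) 0) u @ map ((#) 1) v)"
    | w where "[] \<in> plang a" "w \<in> plang b" "w \<noteq> []" "y = hd (map ((#) 0) [] @ map ((#) 1) w)"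
    using v unfolding firsts_def by (auto simp: hd_map split: if_splits)
  then show "y \<in> firsts (Cat a b)"
  proof cases
    case (1 u)
    then show ?thesis using firstsI[OF plang_CatI[OF 1(1) v]] by simp
  next
    case (2 w)
    then show ?thesis using firstsI[OF plang_CatI[OF 2(1,2)]] by simp
  qed
qed

lemma lasts_Cat:
  "lasts (Cat a b) = (#) 1 ` lasts b \<union> (if [] \<in> plang b then (#) 0 ` lasts a else {})"
proof (intro equalityI subsetI)
  fix y assume "y \<in> lasts (Cat a b)"
  then obtain u w where "u \<in> plang a" "w \<in> plang b" "u \<noteq> [] \<or> w \<noteq> []"
    "y = List.last (map ((#) 0) u @ map ((#) 1) w)"
    unfolding lasts_def by auto
  then show "y \<in> (#) 1 ` lasts b \<union> (if [] \<in> plang b then (#) 0 ` lasts a else {})"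
    by (cases "w = []") (auto simp: last_map intro: lastsI)
next
  obtain v where v: "v \<in> plang a" using plang_nonempty by blast
  fix y assume "y \<in> (#) 1 ` lasts b \<union> (if [] \<in> plang b then (#) 0 ` lasts a else {})"
  then consider w where "w \<in> plang b" "w \<noteq> []" "y = List.last (map ((#) 0) v @ map ((#) 1) w)"
    | u where "[] \<in> plang b" "u \<in> plang a" "u \<noteq> []" "y = List.last (map ((#) 0) u @ map ((#) 1) [])"
    using v unfolding lasts_def by (auto simp: last_map split: if_splits)
  then show "y \<in> lasts (Cat a b)"
  proof cases
    case (1 w)
    then show ?thesis using lastsI[OF plang_CatI[OF v 1(1)]] by simp
  next
    case (2 u)
    then show ?thesis using lastsI[OF plang_CatI[OF 2(2,1)]] by simp
  qed
qed

lemma firsts_Alt: "firsts (Alt a b) = (#) 0 ` firsts a \<union> (#) 1 ` firsts b"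
  unfolding firsts_def by (auto simp: hd_map) (metis imageI list.map_sel(1) map_is_Nil_conv)+

lemma lasts_Alt: "lasts (Alt a b) = (#) 0 ` lasts a \<union> (#) 1 ` lasts b"
  unfolding lasts_def by (auto simp: last_map) (metis imageI last_map map_is_Nil_conv)+

lemma firsts_Star: "firsts (Star a) = (#) 0 ` firsts a"
proof (intro equalityI subsetI)
  fix y assume "y \<in> firsts (Star a)"
  then obtain z where "z \<in> plang (Star a)" "z \<noteq> []" "y = hd z"
    unfolding firsts_def by blast
  then obtain ws where ws: "\<forall>w\<in>set ws. w \<in> map ((#) 0) ` plang a" "concat ws \<noteq> []" "y = hd (concat ws)"
    by auto
  then obtain w where "w \<in> set ws" "w \<noteq> []" "y = hd w"
    using hd_concat_in by metis
  moreover from ws(1) \<open>w \<in> set ws\<close> obtain u where "u \<in> plang a" "w = map ((#) 0) u"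
    by blast
  ultimately show "y \<in> (#) 0 ` firsts a" using firstsI by (auto simp: hd_map)
next
  fix y assume "y \<in> (#) 0 ` firsts a"
  then obtain u where "u \<in> plang a" "u \<noteq> []" "y = 0 # hd u"
    unfolding firsts_def by blast
  then show "y \<in> firsts (Star a)"
    using firstsI[OF plang_StarI[of "[map ((#) 0) u]" a]] by (simp add: hd_map)
qed

lemma lasts_Star: "lasts (Star a) = (#) 0 ` lasts a"
proof (intro equalityI subsetI)
  fix y assume "y \<in> lasts (Star a)"
  then obtain z where "z \<in> plang (Star a)" "z \<noteq> []" "y = List.last z"
    unfolding lasts_def by blast
  then obtain ws where ws: "\<forall>w\<in>set ws. w \<in> map ((#) 0) ` plang a" "concat ws \<noteq> []"
      "y = List.last (concat ws)"
    by auto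
  then obtain w where "w \<in> set ws" "w \<noteq> []" "y = List.last w"
    using last_concat_in by metis
  moreover from ws(1) \<open>w \<in> set ws\<close> obtain u where "u \<in> plang a" "w = map ((#) 0) u"
    by blast
  ultimately show "y \<in> (#) 0 ` lasts a" using lastsI by (auto simp: last_map)
next
  fix y assume "y \<in> (#) 0 ` lasts a"
  then obtain u where "u \<in> plang a" "u \<noteq> []" "y = 0 # List.last u"
    unfolding lasts_def by blast
  then show "y \<in> lasts (Star a)"
    using lastsI[OF plang_StarI[of "[map ((#) 0) u]" a]] by (simp add: last_map)
qed

section \<open>Subexpressions along a path\<close>

lemma node_at_append:
  "node_at R (v @ w) = (case node_at R v of None \<Rightarrow> None | Some s \<Rightarrow> node_at s w)"
proof (induction v arbitrary: R)
  case (Cons i v)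
  then show ?case by (cases R; cases i; cases "i - 1") simp_all
qed simp

lemma node_at_Cons_child: "node_at s [i] = Some c \<Longrightarrow> node_at s (i # v) = node_at c v"
  using node_at_append[of s "[i]" v] by simp

lemma node_at_child_cases:
  assumes "node_at r [i] = Some c"
  obtains (Cat_left) b where "r = Cat c b" "i = 0"
    | (Cat_right) a where "r = Cat a c" "i = 1"
    | (Alt_left) b where "r = Alt c b" "i = 0"
    | (Alt_right) a where "r = Alt a c" "i = 1"
    | (Star) "r = Star c" "i = 0"
  using assms by (cases r; cases i; cases "i - 1") auto

lemma node_at_ConsE:
  assumes "node_at r (i # v) = Some s"
  obtains c where "node_at r [i] = Some c" "node_at c v = Some s"
  using assms by (cases r; cases i; cases "i - 1") auto

lemma node_at_children:
  "node_at R v = Some (Cat a b) \<Longrightarrow> node_at R (left v) = Some a \<and> node_at R (right v) = Some b"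
  by (simp add: left_def right_def node_at_append)

lemma firsts_ConsD: "i # y \<in> firsts s \<Longrightarrow> \<exists>c. node_at s [i] = Some c \<and> y \<in> firsts c"
  by (cases s) (auto simp: firsts_Cat firsts_Alt firsts_Star split: if_splits)

lemma lasts_ConsD: "i # y \<in> lasts s \<Longrightarrow> \<exists>c. node_at s [i] = Some c \<and> y \<in> lasts c"
  by (cases s) (auto simp: lasts_Cat lasts_Alt lasts_Star split: if_splits)

lemma firsts_through_child:
  "node_at s [i] = Some c \<Longrightarrow> i # x \<in> firsts s \<Longrightarrow> y \<in> firsts c \<Longrightarrow> i # y \<in> firsts s"
  by (cases s; cases i; cases "i - 1") (auto simp: firsts_Cat firsts_Alt firsts_Star split: if_splits)

lemma firsts_below_node: "v @ x \<in> firsts s \<Longrightarrow> \<exists>s'. node_at s v = Some s' \<and> x \<in> firsts s'"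
proof (induction v arbitrary: s)
  case (Cons i v)
  then show ?case using firsts_ConsD node_at_Cons_child by fastforce
qed simp

lemma lasts_below_node: "v @ x \<in> lasts s \<Longrightarrow> \<exists>s'. node_at s v = Some s' \<and> x \<in> lasts s'"
proof (induction v arbitrary: s)
  case (Cons i v)
  then show ?case using lasts_ConsD node_at_Cons_child by fastforce
qed simp

lemma firsts_through_node:
  "node_at s v = Some s' \<Longrightarrow> v @ x \<in> firsts s \<Longrightarrow> y \<in> firsts s' \<Longrightarrow> v @ y \<in> firsts s"
proof (induction v arbitrary: s)
  case (Cons i v)
  from Cons.prems(2) obtain c where c: "node_at s [i] = Some c" "v @ x \<in> firsts c"
    using firsts_ConsD by fastforce
  then have "v @ y \<in> firsts c" using Cons node_at_Cons_child by metis
  then show ?case using firsts_through_child c Cons.prems(2) by fastforce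
qed simp

lemma first_iff: "x \<in> first R v \<longleftrightarrow> (\<exists>s y. node_at R v = Some s \<and> y \<in> firsts s \<and> x = v @ y)"
  unfolding first_def firsts_def by blast

lemma last_iff: "x \<in> Defs.last R v \<longleftrightarrow> (\<exists>s y. node_at R v = Some s \<and> y \<in> lasts s \<and> x = v @ y)"
  unfolding last_def lasts_def by blast

lemma first_prefix: "x \<in> first R v \<Longrightarrow> prefix v x"
  unfolding first_iff by auto

lemma last_prefix: "x \<in> Defs.last R v \<Longrightarrow> prefix v x"
  unfolding last_iff by auto

lemma first_on_path:
  assumes "p \<in> first R w" "prefix w v" "prefix v p"
  shows "p \<in> first R v"
proof -
  obtain s y where s: "node_at R w = Some s" "y \<in> firsts s" "p = w @ y"
    using assms(1) unfolding first_iff by blast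
  obtain v' x where "v = w @ v'" "p = v @ x" using assms(2,3) by (auto simp: prefix_def)
  with s firsts_below_node[of v' x s] show ?thesis
    unfolding first_iff by (auto simp: node_at_append)
qed

lemma last_on_path:
  assumes "p \<in> Defs.last R w" "prefix w v" "prefix v p"
  shows "p \<in> Defs.last R v"
proof -
  obtain s y where s: "node_at R w = Some s" "y \<in> lasts s" "p = w @ y"
    using assms(1) unfolding last_iff by blast
  obtain v' x where "v = w @ v'" "p = v @ x" using assms(2,3) by (auto simp: prefix_def)
  with s lasts_below_node[of v' x s] show ?thesis
    unfolding last_iff by (auto simp: node_at_append)
qed

lemma first_nested:
  assumes "prefix w v" "q \<in> first R w" "q \<in> first R v"
  shows "first R v \<subseteq> first R w"
proof
  fix q' assume "q' \<in> first R v"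
  obtain s y where s: "node_at R w = Some s" "y \<in> firsts s" "q = w @ y"
    using assms(2) unfolding first_iff by blast
  obtain v' where v: "v = w @ v'" using assms(1) by (auto simp: prefix_def)
  obtain s' x x' where "node_at s v' = Some s'" "q = v @ x" "x' \<in> firsts s'" "q' = v @ x'"
    using assms(3) \<open>q' \<in> first R v\<close> s(1) v unfolding first_iff by (auto simp: node_at_append)
  with s v firsts_through_node[of s v' s' x x'] show "q' \<in> first R w"
    unfolding first_iff by auto
qed

section \<open>Characterisation of follow\<close>

lemma sublist_last_hd:
  assumes "xs \<noteq> []" "ys \<noteq> []"
  shows "sublist [List.last xs, hd ys] (xs @ ys)"
proof -
  have "xs @ ys = butlast xs @ [List.last xs, hd ys] @ tl ys"
    using assms by simp
  then show ?thesis by (metis sublist_appendI)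
qed

lemma sublist_pair_append:
  "sublist [p, q] (xs @ ys) \<longleftrightarrow>
     sublist [p, q] xs \<or> sublist [p, q] ys \<or> (xs \<noteq> [] \<and> ys \<noteq> [] \<and> List.last xs = p \<and> hd ys = q)"
proof
  assume "sublist [p, q] (xs @ ys)"
  then consider "sublist [p, q] xs" | "sublist [p, q] ys" | "suffix [p, q] xs" | "prefix [p, q] ys"
    | "suffix [p] xs" "prefix [q] ys"
    unfolding sublist_append by (auto simp: Cons_eq_append_conv)
  then show "sublist [p, q] xs \<or> sublist [p, q] ys \<or> (xs \<noteq> [] \<and> ys \<noteq> [] \<and> List.last xs = p \<and> hd ys = q)"
    by cases (auto simp: suffix_def prefix_def)
qed (auto intro: sublist_last_hd sublist_order.order.trans)

lemma sublist_pair_map: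
  "sublist [p, q] (map f xs) \<Longrightarrow> \<exists>p' q'. sublist [p', q'] xs \<and> p = f p' \<and> q = f q'"
  by (drule sublist_map_rightE) (auto simp: map_eq_Cons_conv)

definition root_follow :: "'a re \<Rightarrow> nat list \<Rightarrow> nat list \<Rightarrow> bool" where
  "root_follow r p q \<longleftrightarrow>
     (\<exists>s t x y. r = Cat s t \<and> x \<in> lasts s \<and> y \<in> firsts t \<and> p = 0 # x \<and> q = 1 # y)
   \<or> (\<exists>s. r = Star s \<and> p \<in> lasts r \<and> q \<in> firsts r)"

definition follow_at :: "'a re \<Rightarrow> nat list \<Rightarrow> nat list \<Rightarrow> bool" where
  "follow_at r p q \<longleftrightarrow> (\<exists>v s x y. node_at r v = Some s \<and> root_follow s x y \<and> p = v @ x \<and> q = v @ y)"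

lemma plang_Star_append:
  assumes "z \<in> plang (Star a)" "z' \<in> plang (Star a)"
  shows "z @ z' \<in> plang (Star a)"
proof -
  obtain ws ws' where "\<forall>w\<in>set ws. w \<in> map ((#) 0) ` plang a" "z = concat ws"
    "\<forall>w\<in>set ws'. w \<in> map ((#) 0) ` plang a" "z' = concat ws'"
    using assms by auto
  then have "concat (ws @ ws') \<in> plang (Star a)" by (intro plang_StarI) auto
  then show ?thesis using \<open>z = concat ws\<close> \<open>z' = concat ws'\<close> by (simp only: concat_append)
qed

lemma root_follow_imp_adjacent: "root_follow s x y \<Longrightarrow> \<exists>z\<in>plang s. sublist [x, y] z"
  unfolding root_follow_def
proof (elim disjE exE conjE)
  fix a b x' y' assume "s = Cat a b" "x' \<in> lasts a" "y' \<in> firsts b" "x = 0 # x'" "y = 1 # y'"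
  then obtain u w where "u \<in> plang a" "u \<noteq> []" "x' = List.last u" "w \<in> plang b" "w \<noteq> []" "y' = hd w"
    unfolding lasts_def firsts_def by blast
  then have "sublist [x, y] (map ((#) 0) u @ map ((#) 1) w)"
    using \<open>x = 0 # x'\<close> \<open>y = 1 # y'\<close> sublist_last_hd[of "map ((#) 0) u" "map ((#) 1) w"]
    by (simp add: last_map hd_map)
  then show ?thesis using \<open>s = Cat a b\<close> plang_CatI \<open>u \<in> plang a\<close> \<open>w \<in> plang b\<close> by blast
next
  fix a assume "s = Star a" "x \<in> lasts s" "y \<in> firsts s"
  then obtain u w where "u \<in> plang s" "u \<noteq> []" "x = List.last u" "w \<in> plang s" "w \<noteq> []" "y = hd w"
    unfolding lasts_def firsts_def by blast
  then have "u @ w \<in> plang s" "sublist [x, y] (u @ w)"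
    using \<open>s = Star a\<close> plang_Star_append sublist_last_hd by simp_all
  then show ?thesis by blast
qed

lemma plang_context_child:
  assumes "node_at r [i] = Some c" "z \<in> plang c"
  shows "\<exists>z'\<in>plang r. sublist (map ((#) i) z) z'"
  using assms(1)
proof (cases rule: node_at_child_cases)
  case (Cat_left b)
  obtain w where "w \<in> plang b" using plang_nonempty by blast
  then have "map ((#) 0) z @ map ((#) 1) w \<in> plang r" using Cat_left plang_CatI[OF assms(2)] by simp
  then show ?thesis using Cat_left by (intro bexI) auto
next
  case (Cat_right a)
  obtain u where "u \<in> plang a" using plang_nonempty by blast
  then have "map ((#) 0) u @ map ((#) 1) z \<in> plang r" using Cat_right plang_CatI[OF _ assms(2)] by simp
  then show ?thesis using Cat_right by (intro bexI) auto
next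
  case Star
  have "concat [map ((#) 0) z] \<in> plang (Star c)" using assms(2) by (intro plang_StarI) auto
  then show ?thesis using Star by (intro bexI) auto
qed (use assms(2) in auto)

lemma plang_context:
  "node_at r v = Some s \<Longrightarrow> z \<in> plang s \<Longrightarrow> \<exists>z'\<in>plang r. sublist (map ((@) v) z) z'"
proof (induction v arbitrary: r)
  case Nil
  then show ?case by auto
next
  case (Cons i v)
  from Cons.prems(1) obtain c where c: "node_at r [i] = Some c" "node_at c v = Some s"
    by (rule node_at_ConsE)
  obtain z1 where "z1 \<in> plang c" "sublist (map ((@) v) z) z1" using Cons.IH c(2) Cons.prems(2) by blast
  moreover obtain z2 where "z2 \<in> plang r" "sublist (map ((#) i) z1) z2"
    using plang_context_child c(1) \<open>z1 \<in> plang c\<close> by blast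
  moreover have "map ((@) (i # v)) z = map ((#) i) (map ((@) v) z)" by simp
  ultimately show ?case using map_mono_sublist sublist_order.order.trans by metis
qed

lemma follow_at_imp_adjacent: "follow_at r p q \<Longrightarrow> \<exists>z\<in>plang r. sublist [p, q] z"
proof -
  assume "follow_at r p q"
  then obtain v s x y where "node_at r v = Some s" "root_follow s x y" "p = v @ x" "q = v @ y"
    unfolding follow_at_def by blast
  moreover from \<open>root_follow s x y\<close> obtain z where "z \<in> plang s" "sublist [x, y] z"
    using root_follow_imp_adjacent by blast
  ultimately obtain z' where "z' \<in> plang r" "sublist (map ((@) v) z) z'" "sublist [p, q] (map ((@) v) z)"
    using plang_context map_mono_sublist[of "[x, y]" z "(@) v"] by fastforce
  then show ?thesis using sublist_order.order.trans by blast
qed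

lemma root_follow_follow_at: "root_follow r p q \<Longrightarrow> follow_at r p q"
  unfolding follow_at_def by (metis append_Nil node_at.simps(1))

lemma follow_at_child:
  assumes "node_at r [i] = Some c" "follow_at c p q"
  shows "follow_at r (i # p) (i # q)"
proof -
  obtain v s x y where "node_at c v = Some s" "root_follow s x y" "p = v @ x" "q = v @ y"
    using assms(2) unfolding follow_at_def by blast
  moreover have "node_at r (i # v) = Some s"
    using node_at_Cons_child[OF assms(1)] \<open>node_at c v = Some s\<close> by simp
  ultimately show ?thesis unfolding follow_at_def by (metis append_Cons)
qed

lemma follow_at_map_child:
  assumes "node_at r [i] = Some c" "sublist [p, q] (map ((#) i) z)"
    and "\<And>p' q'. sublist [p', q'] z \<Longrightarrow> follow_at c p' q'"
  shows "follow_at r p q"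
  using sublist_pair_map[OF assms(2)] assms(1,3) follow_at_child by blast

lemma adjacent_imp_follow_at_Cat:
  assumes IH_a: "\<And>z p q. z \<in> plang a \<Longrightarrow> sublist [p, q] z \<Longrightarrow> follow_at a p q"
    and IH_b: "\<And>z p q. z \<in> plang b \<Longrightarrow> sublist [p, q] z \<Longrightarrow> follow_at b p q"
    and "z \<in> plang (Cat a b)" "sublist [p, q] z"
  shows "follow_at (Cat a b) p q"
proof -
  obtain u w where z: "u \<in> plang a" "w \<in> plang b" "z = map ((#) 0) u @ map ((#) 1) w"
    using assms(3) by auto
  from assms(4) consider
    "sublist [p, q] (map ((#) 0) u)" | "sublist [p, q] (map ((#) 1) w)"
    | "u \<noteq> []" "w \<noteq> []" "List.last (map ((#) 0) u) = p" "hd (map ((#) 1) w) = q"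
    unfolding z(3) sublist_pair_append map_is_Nil_conv by blast
  then show ?thesis
  proof cases
    case 1
    then show ?thesis using follow_at_map_child[of "Cat a b" 0 a p q u] IH_a[OF z(1)] by simp
  next
    case 2
    then show ?thesis using follow_at_map_child[of "Cat a b" 1 b p q w] IH_b[OF z(2)] by simp
  next
    case 3
    then have "p = 0 # List.last u" "q = 1 # hd w" by (simp_all add: last_map hd_map)
    then have "root_follow (Cat a b) p q"
      unfolding root_follow_def using lastsI[OF z(1)] firstsI[OF z(2)] 3 by blast
    then show ?thesis by (rule root_follow_follow_at)
  qed
qed

lemma adjacent_imp_follow_at_Star:
  assumes IH: "\<And>z p q. z \<in> plang a \<Longrightarrow> sublist [p, q] z \<Longrightarrow> follow_at a p q"
    and "\<forall>w\<in>set ws. w \<in> map ((#) 0) ` plang a" "sublist [p, q] (concat ws)"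
  shows "follow_at (Star a) p q"
  using assms(2,3)
proof (induction ws)
  case (Cons w ws)
  from Cons.prems(2) consider "sublist [p, q] w" | "sublist [p, q] (concat ws)"
    | "w \<noteq> []" "concat ws \<noteq> []" "p = List.last w" "q = hd (concat ws)"
    unfolding concat.simps sublist_pair_append by blast
  then show ?case
  proof cases
    case 1
    obtain u where "u \<in> plang a" "w = map ((#) 0) u" using Cons.prems(1) by auto
    with 1 show ?thesis using follow_at_map_child[of "Star a" 0 a p q u] IH by simp
  next
    case 2
    then show ?thesis using Cons.IH Cons.prems(1) by simp
  next
    case 3
    have "concat [w] \<in> plang (Star a)" "concat ws \<in> plang (Star a)"
      using Cons.prems(1) by (intro plang_StarI; simp)+
    then have "p \<in> lasts (Star a)" "q \<in> firsts (Star a)"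
      using 3 lastsI[of "concat [w]" "Star a"] firstsI[of "concat ws" "Star a"] by (simp_all del: plang.simps)
    then have "root_follow (Star a) p q" unfolding root_follow_def by blast
    then show ?thesis by (rule root_follow_follow_at)
  qed
qed simp

lemma adjacent_imp_follow_at: "z \<in> plang r \<Longrightarrow> sublist [p, q] z \<Longrightarrow> follow_at r p q"
proof (induction r arbitrary: z p q)
  case (Cat a b)
  then show ?case by (rule adjacent_imp_follow_at_Cat)
next
  case (Alt a b)
  then consider u where "u \<in> plang a" "z = map ((#) 0) u" | w where "w \<in> plang b" "z = map ((#) 1) w"
    by auto
  then show ?case
  proof cases
    case 1
    then show ?thesis using follow_at_map_child[of "Alt a b" 0 a p q u] Alt.IH(1) Alt.prems(2) by simp
  next
    case 2
    then show ?thesis using follow_at_map_child[of "Alt a b" 1 b p q w] Alt.IH(2) Alt.prems(2) by simp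
  qed
next
  case (Star a)
  then obtain ws where "\<forall>w\<in>set ws. w \<in> map ((#) 0) ` plang a" "z = concat ws"
    by auto
  then show ?case using adjacent_imp_follow_at_Star Star.IH Star.prems(2) by blast
qed (auto dest: sublist_length_le)

lemma adjacent_iff_follow_at: "(\<exists>z\<in>plang r. sublist [p, q] z) \<longleftrightarrow> follow_at r p q"
  using adjacent_imp_follow_at follow_at_imp_adjacent by blast

lemma cat_transition_iff:
  "is_cat R v \<and> p \<in> Defs.last R (left v) \<and> q \<in> first R (right v) \<longleftrightarrow>
     (\<exists>a b x y. node_at R v = Some (Cat a b) \<and> root_follow (Cat a b) x y \<and> p = v @ x \<and> q = v @ y)"
  unfolding is_cat_def last_iff first_iff root_follow_def
  by (auto simp: node_at_children) (auto simp: left_def right_def node_at_append)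

lemma star_transition_iff:
  "is_star R v \<and> p \<in> Defs.last R v \<and> q \<in> first R v \<longleftrightarrow>
     (\<exists>a x y. node_at R v = Some (Star a) \<and> root_follow (Star a) x y \<and> p = v @ x \<and> q = v @ y)"
  unfolding is_star_def last_iff first_iff root_follow_def by auto

lemma follow_at_iff:
  "follow_at R p q \<longleftrightarrow>
     (\<exists>v. is_cat R v \<and> p \<in> Defs.last R (left v) \<and> q \<in> first R (right v))
   \<or> (\<exists>v. is_star R v \<and> p \<in> Defs.last R v \<and> q \<in> first R v)"
  unfolding cat_transition_iff star_transition_iff follow_at_def
  by (auto simp: root_follow_def) blast+

lemma follow_iff:
  "q \<in> follow R p \<longleftrightarrow>
     (\<exists>v. is_cat R v \<and> p \<in> Defs.last R (left v) \<and> q \<in> first R (right v))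
   \<or> (\<exists>v. is_star R v \<and> p \<in> Defs.last R v \<and> q \<in> first R v)"
  unfolding follow_at_iff[symmetric] adjacent_iff_follow_at[symmetric] follow_def sublist_def by auto

section \<open>Transition nodes\<close>

lemma lcp_prefix_left: "prefix (lcp p q) p"
  by (induction p q rule: lcp.induct) auto

lemma lcp_prefix_right: "prefix (lcp p q) q"
  by (induction p q rule: lcp.induct) auto

lemma lcp_greatest: "prefix w p \<Longrightarrow> prefix w q \<Longrightarrow> prefix w (lcp p q)"
proof (induction p q arbitrary: w rule: lcp.induct)
  case (1 x xs y ys)
  then show ?case by (cases w) auto
qed auto

lemma pstar_star: "is_star R v \<Longrightarrow> pstar R v = {v}"
  unfolding pstar_def by (auto intro: prefix_order.antisym)

lemma obtain_pstar_below:
  assumes "is_star R w" "prefix w l"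
  obtains v where "v \<in> pstar R l" "prefix w v"
proof -
  define S where "S = {u. prefix u l \<and> is_star R u}"
  have "finite S"
    by (rule finite_subset[of _ "set (prefixes l)"]) (auto simp: S_def)
  moreover have "w \<in> S" using assms by (simp add: S_def)
  ultimately have "Max (length ` S) \<in> length ` S" by (intro Max_in) auto
  then obtain m where "m \<in> S" "length m = Max (length ` S)" by auto
  with \<open>finite S\<close> have m: "m \<in> S" "\<forall>u\<in>S. length u \<le> length m" by auto
  have "prefix u m" if "u \<in> S" for u
    using prefix_length_prefix[of u l m] that m unfolding S_def by blast
  then have "m \<in> pstar R l" "prefix w m"
    using m(1) \<open>w \<in> S\<close> unfolding pstar_def S_def by auto
  then show ?thesis by (rule that)
qed

lemma exists_undominated:
  fixes D :: "'b \<Rightarrow> 'b \<Rightarrow> bool" and f :: "'b \<Rightarrow> nat"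
  assumes "\<And>v u. D v u \<Longrightarrow> f u < f v" "transp D" "v \<in> N"
  shows "\<exists>u\<in>N. (u = v \<or> D v u) \<and> \<not> (\<exists>w\<in>N. D u w)"
  using assms(3)
proof (induction "f v" arbitrary: v rule: less_induct)
  case less
  show ?case
  proof (cases "\<exists>w\<in>N. D v w")
    case True
    then obtain w where "w \<in> N" "D v w" by blast
    with less.hyps[OF assms(1)] obtain u where "u \<in> N" "u = w \<or> D w u" "\<not> (\<exists>w\<in>N. D u w)"
      by blast
    then show ?thesis using \<open>D v w\<close> assms(2) by (metis transpD)
  qed (use less.prems in blast)
qed

lemma cat_dominated_length: "cat_dominated R v u \<Longrightarrow> length u < length v"
  unfolding cat_dominated_def by (simp add: prefix_length_less)

lemma star_dominated_length: "star_dominated R v u \<Longrightarrow> length u < length v"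
  unfolding star_dominated_def by (simp add: prefix_length_less)

lemma transp_cat_dominated: "transp (cat_dominated R)"
  unfolding transp_def cat_dominated_def by (blast intro: prefix_order.less_trans)

lemma transp_star_dominated: "transp (star_dominated R)"
  unfolding transp_def star_dominated_def by (blast intro: prefix_order.less_trans)

lemma firstextent_iff: "v \<in> firstextent R X \<longleftrightarrow> (\<exists>q\<in>X. q \<in> first R v)"
  unfolding firstextent_def nodes_def first_iff by auto

lemma lastextent_iff: "v \<in> lastextent R X \<longleftrightarrow> (\<exists>p\<in>X. p \<in> Defs.last R v)"
  unfolding lastextent_def nodes_def last_iff by auto

lemma delta_cat_eq: "delta_cat R v a = Pos_chr R a \<inter> first R (right v)"
  unfolding delta_cat_def firstextent_iff by blast

lemma delta_star_eq: "is_star R v \<Longrightarrow> delta_star R v a = Pos_chr R a \<inter> first R v"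
  unfolding delta_star_def firstextent_iff by (auto simp: pstar_star)

lemma Ncat_iff:
  "v \<in> Ncat R P a \<longleftrightarrow>
     is_cat R v \<and> (\<exists>p\<in>P. p \<in> Defs.last R (left v)) \<and> Pos_chr R a \<inter> first R (right v) \<noteq> {}"
  unfolding Ncat_def firstextent_iff lastextent_iff by blast

lemma Nstar_iff:
  "v \<in> Nstar R P a \<longleftrightarrow>
     is_star R v \<and> v \<in> pstar_set R (lca_set P (Pos_chr R a))
     \<and> (\<exists>p\<in>P. p \<in> Defs.last R v) \<and> Pos_chr R a \<inter> first R v \<noteq> {}"
  unfolding Nstar_def firstextent_iff lastextent_iff by blast

lemma Ncat_minD:
  assumes "v \<in> Ncat_min R P a"
  shows "v \<in> Ncat R P a" "u \<in> Ncat R P a \<Longrightarrow> \<not> cat_dominated R v u"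
  using assms unfolding Ncat_min_def by auto

lemma Nstar_minD:
  assumes "v \<in> Nstar_min R P a"
  shows "v \<in> Nstar R P a" "u \<in> Nstar R P a \<Longrightarrow> \<not> star_dominated R v u"
  using assms unfolding Nstar_min_def by auto

lemma Ncat_min_exists:
  assumes "v \<in> Ncat R P a"
  obtains u where "u \<in> Ncat_min R P a" "u = v \<or> cat_dominated R v u"
proof -
  obtain u where "u \<in> Ncat R P a" "u = v \<or> cat_dominated R v u"
      "\<not> (\<exists>w\<in>Ncat R P a. cat_dominated R u w)"
    by (metis exists_undominated[where f = length] cat_dominated_length transp_cat_dominated assms)
  then show thesis using that unfolding Ncat_min_def by blast
qed

lemma Nstar_min_exists:
  assumes "v \<in> Nstar R P a"
  obtains u where "u \<in> Nstar_min R P a" "u = v \<or> star_dominated R v u"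
proof -
  obtain u where "u \<in> Nstar R P a" "u = v \<or> star_dominated R v u"
      "\<not> (\<exists>w\<in>Nstar R P a. star_dominated R u w)"
    by (metis exists_undominated[where f = length] star_dominated_length transp_star_dominated assms)
  then show thesis using that unfolding Nstar_min_def by blast
qed

lemma cat_dominated_cases:
  assumes "q \<in> first R (right u)" "q \<in> first R (right v)" "u \<noteq> v"
  shows "cat_dominated R u v \<or> cat_dominated R v u"
proof -
  have dominated: "cat_dominated R y x"
    if "prefix (right x) (right y)" "x \<noteq> y" "q \<in> first R (right x)" "q \<in> first R (right y)" for x y
  proof -
    have "prefix (x @ [1]) y"
      using that(1,2) unfolding right_def by (auto simp: prefix_snoc)
    then have "strict_prefix x y"
      by (auto simp: prefix_def strict_prefix_def)
    moreover have "first R (right y) \<subseteq> first R (right x)"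
      using first_nested that(1,3,4) by blast
    ultimately show ?thesis unfolding cat_dominated_def by blast
  qed
  have "prefix (right u) (right v) \<or> prefix (right v) (right u)"
    using prefix_same_cases first_prefix assms(1,2) by blast
  then show ?thesis using dominated assms by blast
qed

lemma star_dominated_cases:
  assumes "q \<in> first R u" "q \<in> first R v" "u \<noteq> v"
  shows "star_dominated R u v \<or> star_dominated R v u"
proof -
  have dominated: "star_dominated R y x" if "prefix x y" "x \<noteq> y" "q \<in> first R x" "q \<in> first R y" for x y
    unfolding star_dominated_def strict_prefix_def using first_nested[OF that(1,3,4)] that(1,2) by blast
  have "prefix u v \<or> prefix v u"
    using prefix_same_cases first_prefix assms(1,2) by blast
  then show ?thesis using dominated assms by blast
qed

lemma delta_cat_disjoint:
  assumes "u \<in> Ncat_min R P a" "v \<in> Ncat_min R P a" "u \<noteq> v"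
  shows "delta_cat R u a \<inter> delta_cat R v a = {}"
proof (rule ccontr)
  assume "delta_cat R u a \<inter> delta_cat R v a \<noteq> {}"
  then obtain q where "q \<in> first R (right u)" "q \<in> first R (right v)"
    unfolding delta_cat_eq by blast
  then have "cat_dominated R u v \<or> cat_dominated R v u"
    using cat_dominated_cases assms(3) by blast
  then show False
    using Ncat_minD(2)[OF assms(1) Ncat_minD(1)[OF assms(2)]]
      Ncat_minD(2)[OF assms(2) Ncat_minD(1)[OF assms(1)]] by blast
qed

lemma delta_star_disjoint:
  assumes "u \<in> Nstar_min R P a" "v \<in> Nstar_min R P a" "u \<noteq> v"
  shows "delta_star R u a \<inter> delta_star R v a = {}"
proof (rule ccontr)
  have "is_star R u" "is_star R v"
    using Nstar_minD(1)[OF assms(1)] Nstar_minD(1)[OF assms(2)] unfolding Nstar_iff by blast+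
  moreover assume "delta_star R u a \<inter> delta_star R v a \<noteq> {}"
  ultimately obtain q where "q \<in> first R u" "q \<in> first R v"
    by (auto simp: delta_star_eq)
  then have "star_dominated R u v \<or> star_dominated R v u"
    using star_dominated_cases assms(3) by blast
  then show False
    using Nstar_minD(2)[OF assms(1) Nstar_minD(1)[OF assms(2)]]
      Nstar_minD(2)[OF assms(2) Nstar_minD(1)[OF assms(1)]] by blast
qed

lemma delta_cat_nonempty: "v \<in> Ncat_min R P a \<Longrightarrow> delta_cat R v a \<noteq> {}"
  by (drule Ncat_minD(1)) (simp add: Ncat_iff delta_cat_eq)

lemma delta_star_nonempty:
  assumes "v \<in> Nstar_min R P a"
  shows "delta_star R v a \<noteq> {}"
proof -
  have "is_star R v" "Pos_chr R a \<inter> first R v \<noteq> {}"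
    using Nstar_minD(1)[OF assms] unfolding Nstar_iff by blast+
  then show ?thesis by (simp add: delta_star_eq)
qed

lemma cat_follow_in_delta_cat:
  assumes "is_cat R v" "p \<in> P" "p \<in> Defs.last R (left v)" "q \<in> Pos_chr R a" "q \<in> first R (right v)"
  shows "\<exists>u\<in>Ncat_min R P a. q \<in> delta_cat R u a"
proof -
  have "v \<in> Ncat R P a" unfolding Ncat_iff using assms by blast
  then obtain u where "u \<in> Ncat_min R P a" "u = v \<or> cat_dominated R v u"
    by (rule Ncat_min_exists)
  moreover from this(2) have "q \<in> first R (right u)"
    using assms(5) unfolding cat_dominated_def by blast
  ultimately show ?thesis using assms(4) unfolding delta_cat_eq by blast
qed

lemma star_follow_in_Nstar:
  assumes "is_star R w" "p \<in> P" "p \<in> Defs.last R w" "q \<in> Pos_chr R a" "q \<in> first R w"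
  shows "\<exists>v\<in>Nstar R P a. q \<in> first R v"
proof -
  have "prefix w (lcp p q)"
    by (rule lcp_greatest[OF last_prefix[OF assms(3)] first_prefix[OF assms(5)]])
  with assms(1) obtain v where v: "v \<in> pstar R (lcp p q)" "prefix w v"
    by (rule obtain_pstar_below)
  then have "is_star R v" and below_lcp: "prefix v (lcp p q)" unfolding pstar_def by auto
  have "p \<in> Defs.last R v"
    by (rule last_on_path[OF assms(3) v(2) prefix_order.trans[OF below_lcp lcp_prefix_left]])
  moreover have "q \<in> first R v"
    by (rule first_on_path[OF assms(5) v(2) prefix_order.trans[OF below_lcp lcp_prefix_right]])
  moreover have "lcp p q \<in> lca_set P (Pos_chr R a)"
    unfolding lca_set_def using assms(2,4) by blast
  with v(1) have "v \<in> pstar_set R (lca_set P (Pos_chr R a))"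
    unfolding pstar_set_def by blast
  ultimately have "v \<in> Nstar R P a"
    unfolding Nstar_iff using \<open>is_star R v\<close> assms(2,4) by blast
  with \<open>q \<in> first R v\<close> show ?thesis by blast
qed

lemma star_follow_in_delta_star:
  assumes "is_star R w" "p \<in> P" "p \<in> Defs.last R w" "q \<in> Pos_chr R a" "q \<in> first R w"
  shows "\<exists>u\<in>Nstar_min R P a. q \<in> delta_star R u a"
proof -
  obtain v where "v \<in> Nstar R P a" "q \<in> first R v"
    using star_follow_in_Nstar[OF assms] by blast
  moreover from this(1) obtain u where "u \<in> Nstar_min R P a" "u = v \<or> star_dominated R v u"
    by (rule Nstar_min_exists)
  ultimately have "q \<in> first R u" unfolding star_dominated_def by blast
  moreover have "is_star R u"
    using Nstar_minD(1)[OF \<open>u \<in> Nstar_min R P a\<close>] unfolding Nstar_iff by blast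
  ultimately have "q \<in> delta_star R u a" using assms(4) by (simp add: delta_star_eq)
  with \<open>u \<in> Nstar_min R P a\<close> show ?thesis by blast
qed

lemma delta_subset_transitions:
  "delta R P a \<subseteq> (\<Union>v\<in>Ncat_min R P a. delta_cat R v a) \<union> (\<Union>v\<in>Nstar_min R P a. delta_star R v a)"
proof
  fix q assume "q \<in> delta R P a"
  then obtain p where p: "p \<in> P" "q \<in> Pos_chr R a" "q \<in> follow R p"
    unfolding delta_def by blast
  from p(3) show "q \<in> (\<Union>v\<in>Ncat_min R P a. delta_cat R v a) \<union> (\<Union>v\<in>Nstar_min R P a. delta_star R v a)"
    unfolding follow_iff
  proof (elim disjE exE conjE)
    fix v assume "is_cat R v" "p \<in> Defs.last R (left v)" "q \<in> first R (right v)"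
    then show ?thesis using cat_follow_in_delta_cat[OF _ p(1) _ p(2)] by blast
  next
    fix v assume "is_star R v" "p \<in> Defs.last R v" "q \<in> first R v"
    then show ?thesis using star_follow_in_delta_star[OF _ p(1) _ p(2)] by blast
  qed
qed

lemma transitions_subset_delta:
  "(\<Union>v\<in>Ncat_min R P a. delta_cat R v a) \<union> (\<Union>v\<in>Nstar_min R P a. delta_star R v a) \<subseteq> delta R P a"
proof (intro Un_least UN_least subsetI)
  fix v q assume v: "v \<in> Ncat_min R P a" and "q \<in> delta_cat R v a"
  then have "q \<in> Pos_chr R a" "q \<in> first R (right v)" by (simp_all add: delta_cat_eq)
  moreover obtain p where "is_cat R v" "p \<in> P" "p \<in> Defs.last R (left v)"
    using Ncat_minD(1)[OF v] unfolding Ncat_iff by blast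
  ultimately show "q \<in> delta R P a" unfolding delta_def follow_iff by blast
next
  fix v q assume v: "v \<in> Nstar_min R P a" and "q \<in> delta_star R v a"
  obtain p where "is_star R v" "p \<in> P" "p \<in> Defs.last R v"
    using Nstar_minD(1)[OF v] unfolding Nstar_iff by blast
  moreover from this(1) have "q \<in> Pos_chr R a" "q \<in> first R v"
    using \<open>q \<in> delta_star R v a\<close> by (simp_all add: delta_star_eq)
  ultimately show "q \<in> delta R P a" unfolding delta_def follow_iff by blast
qed

theorem lemma3:
  fixes R :: "'a re" and P :: "nat list set" and a :: 'a
  assumes "P \<subseteq> Pos R"
  shows "delta R P a = (\<Union>v\<in>Ncat_min R P a. delta_cat R v a) \<union> (\<Union>v\<in>Nstar_min R P a. delta_star R v a)
    \<and> (\<forall>u\<in>Ncat_min R P a. \<forall>v\<in>Ncat_min R P a. u \<noteq> v \<longrightarrow> delta_cat R u a \<inter> delta_cat R v a = {})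
    \<and> (\<forall>u\<in>Nstar_min R P a. \<forall>v\<in>Nstar_min R P a. u \<noteq> v \<longrightarrow> delta_star R u a \<inter> delta_star R v a = {})
    \<and> (\<forall>v\<in>Ncat_min R P a. delta_cat R v a \<noteq> {})
    \<and> (\<forall>v\<in>Nstar_min R P a. delta_star R v a \<noteq> {})"
proof (intro conjI ballI impI)
  show "delta R P a = (\<Union>v\<in>Ncat_min R P a. delta_cat R v a) \<union> (\<Union>v\<in>Nstar_min R P a. delta_star R v a)"
    by (rule equalityI[OF delta_subset_transitions transitions_subset_delta])
qed (simp_all add: delta_cat_disjoint delta_star_disjoint delta_cat_nonempty delta_star_nonempty)

end
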